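(* Let $G=(V,w,m)$ be a locally finite connected weighted graph which is weakly spherically symmetric with respect to $x_0\in V$, and suppose $G$ satisfies $CD(K,n)$ for some $K\in\mathbb R$, $n\in(0,\infty]$. Then $G_P^{x_0}$ satisfies $CD(K,n)$.
   Context: A weighted graph is $G=(V,w,m)$ with $V$ countable, $w:V\times V\to[0,\infty)$ symmetric with $w(x,x)=0$, $m:V\to(0,\infty)$; $x\sim y$ iff $w(x,y)>0$. Laplacian $\Delta f(x)=\frac1{m(x)}\sum_yw(x,y)(f(y)-f(x))$. $2\Gamma(f,g)=\Delta(fg)-f\Delta g-g\Delta f$, $2\Gamma_2(f,g)=\Delta\Gamma(f,g)-\Gamma(f,\Delta g)-\Gamma(g,\Delta f)$, $\Gamma f=\Gamma(f,f)$, $\Gamma_2f=\Gamma_2(f,f)$; $CD(K,n)$ means $\Gamma_2f(x)\ge\frac1n(\Delta f(x))^2+K\Gamma f(x)$ for all $f$ and all vertices $x$ (with $\frac1\infty=0$). $d$ is the combinatorial distance, $S_i(x_0)=\{y:d(x_0,y)=i\}$; $m(A)=\sum_{x\in A}m(x)$, $w(A,B)=\sum_{(x,y)\in A\times B}w(x,y)$. $d_\mp^{x_0}(z)=\sum_{y\sim z,\ d(y,x_0)\lessgtr d(z,x_0)}\frac{w(y,z)}{m(z)}$. $G$ is weakly spherically symmetric w.r.t. $x_0$ if for all $y,z$ with $d(y,x_0)=d(z,x_0)$: $m(y)=m(z)$, $d_-^{x_0}(y)=d_-^{x_0}(z)$, $d_+^{x_0}(y)=d_+^{x_0}(z)$.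 $G_P^{x_0}=(V_G^{x_0},w_G^{x_0},m_G^{x_0})$ has vertex set $V_G^{x_0}=\{i\in\mathbb N_0:i\le\sup_yd(x_0,y)\}$, $w_G^{x_0}(i,j)=w(S_i(x_0),S_j(x_0))$ if $|i-j|=1$ and $0$ otherwise, $m_G^{x_0}(i)=m(S_i(x_0))$. *)

theory Defs
  imports Complex_Main "HOL-Library.Countable_Set" "HOL-Library.Extended_Real"
begin

definition weighted_graph :: "'a set \<Rightarrow> ('a \<Rightarrow> 'a \<Rightarrow> real) \<Rightarrow> ('a \<Rightarrow> real) \<Rightarrow> bool" where
  "weighted_graph V w m \<longleftrightarrow> countable V
     \<and> (\<forall>x y. 0 \<le> w x y) \<and> (\<forall>x y. w x y = w y x) \<and> (\<forall>x. w x x = 0)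
     \<and> (\<forall>x y. 0 < w x y \<longrightarrow> x \<in> V \<and> y \<in> V)
     \<and> (\<forall>x\<in>V. 0 < m x)"

definition adj :: "('a \<Rightarrow> 'a \<Rightarrow> real) \<Rightarrow> ('a \<times> 'a) set" where
  "adj w = {(x, y). 0 < w x y}"

definition nbrs :: "'a set \<Rightarrow> ('a \<Rightarrow> 'a \<Rightarrow> real) \<Rightarrow> 'a \<Rightarrow> 'a set" where
  "nbrs V w x = {y \<in> V. 0 < w x y}"

definition locally_finite :: "'a set \<Rightarrow> ('a \<Rightarrow> 'a \<Rightarrow> real) \<Rightarrow> bool" where
  "locally_finite V w \<longleftrightarrow> (\<forall>x\<in>V. finite (nbrs V w x))"

definition connected_graph :: "'a set \<Rightarrow> ('a \<Rightarrow> 'a \<Rightarrow> real) \<Rightarrow> bool" where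
  "connected_graph V w \<longleftrightarrow> (\<forall>x\<in>V. \<forall>y\<in>V. (x, y) \<in> (adj w)\<^sup>*)"

definition laplacian :: "'a set \<Rightarrow> ('a \<Rightarrow> 'a \<Rightarrow> real) \<Rightarrow> ('a \<Rightarrow> real) \<Rightarrow> ('a \<Rightarrow> real) \<Rightarrow> 'a \<Rightarrow> real" where
  "laplacian V w m f x = (\<Sum>y\<in>nbrs V w x. w x y * (f y - f x)) / m x"

definition Gam :: "'a set \<Rightarrow> ('a \<Rightarrow> 'a \<Rightarrow> real) \<Rightarrow> ('a \<Rightarrow> real) \<Rightarrow> ('a \<Rightarrow> real) \<Rightarrow> ('a \<Rightarrow> real) \<Rightarrow> 'a \<Rightarrow> real" where
  "Gam V w m f g x = (laplacian V w m (\<lambda>z. f z * g z) x - f x * laplacian V w m g x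
                        - g x * laplacian V w m f x) / 2"

definition Gam2 :: "'a set \<Rightarrow> ('a \<Rightarrow> 'a \<Rightarrow> real) \<Rightarrow> ('a \<Rightarrow> real) \<Rightarrow> ('a \<Rightarrow> real) \<Rightarrow> ('a \<Rightarrow> real) \<Rightarrow> 'a \<Rightarrow> real" where
  "Gam2 V w m f g x = (laplacian V w m (Gam V w m f g) x
                         - Gam V w m f (laplacian V w m g) x
                         - Gam V w m g (laplacian V w m f) x) / 2"

definition inv_dim :: "ereal \<Rightarrow> real" where
  "inv_dim n = (if n = \<infinity> then 0 else 1 / real_of_ereal n)"

definition CD :: "'a set \<Rightarrow> ('a \<Rightarrow> 'a \<Rightarrow> real) \<Rightarrow> ('a \<Rightarrow> real) \<Rightarrow> real \<Rightarrow> ereal \<Rightarrow> bool" where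
  "CD V w m K n \<longleftrightarrow> (\<forall>f x. x \<in> V \<longrightarrow>
      Gam2 V w m f f x \<ge> inv_dim n * (laplacian V w m f x)\<^sup>2 + K * Gam V w m f f x)"

definition gdist :: "('a \<Rightarrow> 'a \<Rightarrow> real) \<Rightarrow> 'a \<Rightarrow> 'a \<Rightarrow> nat" where
  "gdist w x y = (LEAST k. (x, y) \<in> adj w ^^ k)"

definition sphere_g :: "'a set \<Rightarrow> ('a \<Rightarrow> 'a \<Rightarrow> real) \<Rightarrow> 'a \<Rightarrow> nat \<Rightarrow> 'a set" where
  "sphere_g V w x0 i = {y \<in> V. gdist w x0 y = i}"

definition d_minus :: "'a set \<Rightarrow> ('a \<Rightarrow> 'a \<Rightarrow> real) \<Rightarrow> ('a \<Rightarrow> real) \<Rightarrow> 'a \<Rightarrow> 'a \<Rightarrow> real" where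
  "d_minus V w m x0 z = (\<Sum>y\<in>{y\<in>nbrs V w z. gdist w x0 y < gdist w x0 z}. w y z / m z)"

definition d_plus :: "'a set \<Rightarrow> ('a \<Rightarrow> 'a \<Rightarrow> real) \<Rightarrow> ('a \<Rightarrow> real) \<Rightarrow> 'a \<Rightarrow> 'a \<Rightarrow> real" where
  "d_plus V w m x0 z = (\<Sum>y\<in>{y\<in>nbrs V w z. gdist w x0 y > gdist w x0 z}. w y z / m z)"

definition weakly_sph_sym :: "'a set \<Rightarrow> ('a \<Rightarrow> 'a \<Rightarrow> real) \<Rightarrow> ('a \<Rightarrow> real) \<Rightarrow> 'a \<Rightarrow> bool" where
  "weakly_sph_sym V w m x0 \<longleftrightarrow> (\<forall>y\<in>V. \<forall>z\<in>V. gdist w x0 y = gdist w x0 z \<longrightarrow>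
      m y = m z \<and> d_minus V w m x0 y = d_minus V w m x0 z \<and> d_plus V w m x0 y = d_plus V w m x0 z)"

text \<open>The quotient (path) graph G_P^{x0}. Vertex set {i. i \<le> sup_y d(x0,y)}.\<close>
definition VP :: "'a set \<Rightarrow> ('a \<Rightarrow> 'a \<Rightarrow> real) \<Rightarrow> 'a \<Rightarrow> nat set" where
  "VP V w x0 = {i. \<exists>y\<in>V. i \<le> gdist w x0 y}"

definition wP :: "'a set \<Rightarrow> ('a \<Rightarrow> 'a \<Rightarrow> real) \<Rightarrow> 'a \<Rightarrow> nat \<Rightarrow> nat \<Rightarrow> real" where
  "wP V w x0 i j = (if i = j + 1 \<or> j = i + 1
      then (\<Sum>p\<in>sphere_g V w x0 i \<times> sphere_g V w x0 j. w (fst p) (snd p)) else 0)"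

definition mP :: "'a set \<Rightarrow> ('a \<Rightarrow> 'a \<Rightarrow> real) \<Rightarrow> ('a \<Rightarrow> real) \<Rightarrow> 'a \<Rightarrow> nat \<Rightarrow> real" where
  "mP V w m x0 i = (\<Sum>y\<in>sphere_g V w x0 i. m y)"

end

theory Submission
  imports Defs
begin

text \<open>
  The Laplacian of a radial function \<open>f \<circ> d(x\<^sub>0,\<cdot>)\<close> at \<open>x\<close> only sees the normalised weights
  \<open>d\<^sub>-(x)\<close>, \<open>d\<^sub>+(x)\<close> towards the neighbouring spheres; weak spherical symmetry makes these depend
  only on the sphere of \<open>x\<close>, and they are exactly the weights of \<open>G\<^sub>P\<close> at \<open>d(x\<^sub>0,x)\<close>
  divided by its measure. So the distance map intertwines the two Laplacians, hence also
  \<open>\<Gamma>\<close> and \<open>\<Gamma>\<^sub>2\<close>, which are built from the Laplacian algebraically. Testing \<open>CD(K,n)\<close> of \<open>G\<close> on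
  lifted functions then gives \<open>CD(K,n)\<close> of \<open>G\<^sub>P\<close> at every sphere index.
\<close>

lemma laplacian_cong:
  assumes "x \<in> V" and "\<forall>y\<in>V. F y = G y"
  shows "laplacian V w m F x = laplacian V w m G x"
  using assms unfolding laplacian_def nbrs_def by simp

lemma Gam_cong:
  assumes "x \<in> V" and "\<forall>y\<in>V. F y = F' y" and "\<forall>y\<in>V. G y = G' y"
  shows "Gam V w m F G x = Gam V w m F' G' x"
proof -
  have "laplacian V w m (\<lambda>z. F z * G z) x = laplacian V w m (\<lambda>z. F' z * G' z) x"
    using assms by (intro laplacian_cong) auto
  moreover have "laplacian V w m F x = laplacian V w m F' x"
    and "laplacian V w m G x = laplacian V w m G' x"
    using assms by (auto intro: laplacian_cong)
  ultimately show ?thesis unfolding Gam_def using assms by simp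
qed

locale laplacian_intertwining =
  fixes V :: "'a set" and w :: "'a \<Rightarrow> 'a \<Rightarrow> real" and m :: "'a \<Rightarrow> real"
    and V' :: "'b set" and w' :: "'b \<Rightarrow> 'b \<Rightarrow> real" and m' :: "'b \<Rightarrow> real"
    and \<phi> :: "'a \<Rightarrow> 'b"
  assumes laplacian_comp: "x \<in> V \<Longrightarrow> laplacian V w m (f \<circ> \<phi>) x = laplacian V' w' m' f (\<phi> x)"
begin

lemma Gam_comp:
  assumes "x \<in> V"
  shows "Gam V w m (f \<circ> \<phi>) (g \<circ> \<phi>) x = Gam V' w' m' f g (\<phi> x)"
proof -
  have "(\<lambda>y. (f \<circ> \<phi>) y * (g \<circ> \<phi>) y) = (\<lambda>i. f i * g i) \<circ> \<phi>" by auto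
  then show ?thesis
    unfolding Gam_def using laplacian_comp[OF assms] by simp
qed

lemma Gam2_comp:
  assumes "x \<in> V"
  shows "Gam2 V w m (f \<circ> \<phi>) (g \<circ> \<phi>) x = Gam2 V' w' m' f g (\<phi> x)"
proof -
  let ?L = "laplacian V w m" and ?L' = "laplacian V' w' m'"
  have Gam: "\<forall>y\<in>V. Gam V w m (f \<circ> \<phi>) (g \<circ> \<phi>) y = (Gam V' w' m' f g \<circ> \<phi>) y"
    using Gam_comp by simp
  have lap: "\<forall>y\<in>V. ?L (h \<circ> \<phi>) y = (?L' h \<circ> \<phi>) y" for h
    using laplacian_comp by simp
  have Gam_lap: "Gam V w m (h \<circ> \<phi>) (?L (k \<circ> \<phi>)) x = Gam V' w' m' h (?L' k) (\<phi> x)" for h k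
  proof -
    have "Gam V w m (h \<circ> \<phi>) (?L (k \<circ> \<phi>)) x = Gam V w m (h \<circ> \<phi>) (?L' k \<circ> \<phi>) x"
      using lap by (intro Gam_cong[OF assms]) auto
    also have "\<dots> = Gam V' w' m' h (?L' k) (\<phi> x)" by (rule Gam_comp[OF assms])
    finally show ?thesis .
  qed
  have "?L (Gam V w m (f \<circ> \<phi>) (g \<circ> \<phi>)) x = ?L' (Gam V' w' m' f g) (\<phi> x)"
    using laplacian_cong[OF assms Gam] laplacian_comp[OF assms] by (rule trans)
  then show ?thesis unfolding Gam2_def Gam_lap by simp
qed

lemma CD_transfer:
  assumes "CD V w m K n" and "V' \<subseteq> \<phi> ` V"
  shows "CD V' w' m' K n"
  unfolding CD_def
proof (intro allI impI)
  fix f :: "'b \<Rightarrow> real" and i assume "i \<in> V'"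
  then obtain x where x: "x \<in> V" "\<phi> x = i" using assms(2) by blast
  have "Gam2 V w m (f \<circ> \<phi>) (f \<circ> \<phi>) x
          \<ge> inv_dim n * (laplacian V w m (f \<circ> \<phi>) x)\<^sup>2 + K * Gam V w m (f \<circ> \<phi>) (f \<circ> \<phi>) x"
    using assms(1) x(1) unfolding CD_def by blast
  then show "Gam2 V' w' m' f f i \<ge> inv_dim n * (laplacian V' w' m' f i)\<^sup>2 + K * Gam V' w' m' f f i"
    using Gam2_comp Gam_comp laplacian_comp x by simp
qed

end

lemma gdist_le_relpow: "(x, y) \<in> adj w ^^ k \<Longrightarrow> gdist w x y \<le> k"
  unfolding gdist_def by (rule Least_le)

locale rooted_graph =
  fixes V :: "'a set" and w :: "'a \<Rightarrow> 'a \<Rightarrow> real" and m :: "'a \<Rightarrow> real" and x0 :: 'a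
  assumes weighted_graph: "weighted_graph V w m"
    and locally_finite: "locally_finite V w"
    and connected: "connected_graph V w"
    and root_in_V: "x0 \<in> V"
begin

abbreviation "d \<equiv> gdist w x0"
abbreviation "S \<equiv> sphere_g V w x0"
abbreviation "N \<equiv> nbrs V w"

lemma w_nonneg: "0 \<le> w x y"
  and w_sym: "w x y = w y x"
  and w_pos_in_V: "0 < w x y \<Longrightarrow> x \<in> V \<and> y \<in> V"
  and m_pos: "x \<in> V \<Longrightarrow> 0 < m x"
  using weighted_graph unfolding weighted_graph_def by auto

lemma finite_nbrs: "x \<in> V \<Longrightarrow> finite (N x)"
  using locally_finite unfolding locally_finite_def by auto

lemma gdist_relpow:
  assumes "y \<in> V"
  shows "(x0, y) \<in> adj w ^^ d y"
proof -
  have "(x0, y) \<in> (adj w)\<^sup>*" using connected root_in_V assms unfolding connected_graph_def by auto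
  then obtain k where "(x0, y) \<in> adj w ^^ k" using rtrancl_imp_relpow by blast
  then show ?thesis unfolding gdist_def by (rule LeastI)
qed

lemma gdist_eq_0_imp_root: "y \<in> V \<Longrightarrow> d y = 0 \<Longrightarrow> y = x0"
  using gdist_relpow[of y] by simp

lemma gdist_nbr_le:
  assumes "y \<in> V" and "0 < w y z"
  shows "d z \<le> Suc (d y)"
proof -
  have "(x0, z) \<in> adj w ^^ Suc (d y)"
    using relpow_Suc_I[OF gdist_relpow[OF assms(1)]] assms(2) by (simp add: adj_def)
  then show ?thesis by (rule gdist_le_relpow)
qed

lemma gdist_nbr_ge: "y \<in> V \<Longrightarrow> 0 < w y z \<Longrightarrow> d y \<le> Suc (d z)"
  using gdist_nbr_le[of z y] w_pos_in_V[of y z] w_sym[of y z] by auto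

lemma gdist_predecessor:
  assumes z: "z \<in> V" and dz: "d z = Suc i"
  obtains u where "u \<in> V" "d u = i" "0 < w u z"
proof -
  have "(x0, z) \<in> adj w ^^ Suc i" using gdist_relpow[OF z] dz by simp
  then obtain u where u: "(x0, u) \<in> adj w ^^ i" "(u, z) \<in> adj w"
    by (rule relpow_Suc_E)
  then have wu: "0 < w u z" and uV: "u \<in> V" using w_pos_in_V by (auto simp: adj_def)
  have "d u = i" using gdist_le_relpow[OF u(1)] gdist_nbr_le[OF uV wu] dz by simp
  then show thesis using that uV wu by blast
qed

lemma finite_sphere: "finite (S i)"
proof (induction i)
  case 0
  have "S 0 \<subseteq> {x0}" unfolding sphere_g_def using gdist_eq_0_imp_root by auto
  then show ?case using finite_subset by blast
next
  case (Suc i)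
  have "S (Suc i) \<subseteq> (\<Union>u\<in>S i. N u)"
  proof
    fix z assume "z \<in> S (Suc i)"
    then have z: "z \<in> V" "d z = Suc i" unfolding sphere_g_def by auto
    then obtain u where "u \<in> V" "d u = i" "0 < w u z" by (rule gdist_predecessor)
    then show "z \<in> (\<Union>u\<in>S i. N u)" using z unfolding sphere_g_def nbrs_def by auto
  qed
  moreover have "finite (\<Union>u\<in>S i. N u)"
    using Suc finite_nbrs unfolding sphere_g_def by auto
  ultimately show ?case using finite_subset by blast
qed

lemma sphere_nonempty_below: "y \<in> V \<Longrightarrow> i \<le> d y \<Longrightarrow> \<exists>z\<in>V. d z = i"
proof (induction "d y" arbitrary: y)
  case 0
  then show ?case by auto
next
  case (Suc k)
  show ?case
  proof (cases "i = d y")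
    case False
    obtain u where "u \<in> V" "d u = k" using gdist_predecessor Suc.prems(1) Suc.hyps(2) by metis
    then show ?thesis using Suc.hyps(1) Suc.prems(2) Suc.hyps(2) False by auto
  qed (use Suc.prems in auto)
qed

lemma VP_eq_image: "VP V w x0 = d ` V"
  unfolding VP_def using sphere_nonempty_below by fastforce

lemma mP_pos: "x \<in> V \<Longrightarrow> 0 < mP V w m x0 (d x)"
  unfolding mP_def using finite_sphere m_pos by (intro sum_pos) (auto simp: sphere_g_def)

lemma sum_sphere_weights:
  "(\<Sum>z\<in>S j. w y z) = (\<Sum>z\<in>{z\<in>N y. d z = j}. w y z)"
proof (rule sum.mono_neutral_right)
  show "\<forall>z\<in>S j - {z\<in>N y. d z = j}. w y z = 0"
    unfolding nbrs_def sphere_g_def using w_nonneg[of y] by (auto simp: less_le)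
qed (use finite_sphere in \<open>auto simp: nbrs_def sphere_g_def\<close>)

lemma sum_wP_nbrs:
  "(\<Sum>j\<in>nbrs (VP V w x0) (wP V w x0) i. wP V w x0 i j * h j)
     = (\<Sum>j\<in>{j. Suc j = i \<or> j = Suc i}. wP V w x0 i j * h j)"
proof (rule sum.mono_neutral_left)
  show "finite {j. Suc j = i \<or> j = Suc i}" by (rule finite_subset[of _ "{..Suc i}"]) auto
  have "wP V w x0 i j = 0" if "j \<notin> VP V w x0" for j
  proof -
    have "S j = {}" using that unfolding VP_eq_image sphere_g_def by auto
    then show ?thesis unfolding wP_def by simp
  qed
  moreover have "0 \<le> wP V w x0 i j" for j
    unfolding wP_def by (auto intro!: sum_nonneg w_nonneg)
  ultimately show "\<forall>j\<in>{j. Suc j = i \<or> j = Suc i} - nbrs (VP V w x0) (wP V w x0) i.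
                      wP V w x0 i j * h j = 0"
    unfolding nbrs_def by (force simp: less_le)
qed (auto simp: nbrs_def wP_def split: if_splits)

end

locale weakly_sph_sym_graph = rooted_graph +
  assumes weakly_sph_sym: "weakly_sph_sym V w m x0"
begin

abbreviation "dm \<equiv> d_minus V w m x0"
abbreviation "dp \<equiv> d_plus V w m x0"

lemma same_sphere:
  "y \<in> V \<Longrightarrow> x \<in> V \<Longrightarrow> d y = d x \<Longrightarrow> m y = m x \<and> dm y = dm x \<and> dp y = dp x"
  using weakly_sph_sym unfolding weakly_sph_sym_def by blast

lemma m_mult_d_plus:
  assumes y: "y \<in> V"
  shows "m y * dp y = (\<Sum>z\<in>{z\<in>N y. d z = Suc (d y)}. w y z)"
proof -
  have "{z\<in>N y. d y < d z} = {z\<in>N y. d z = Suc (d y)}"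
    using gdist_nbr_le[OF y] unfolding nbrs_def by force
  then show ?thesis
    unfolding d_plus_def using m_pos[OF y] w_sym by (simp add: sum_distrib_left)
qed

lemma m_mult_d_minus:
  assumes y: "y \<in> V" and dy: "d y = Suc k"
  shows "m y * dm y = (\<Sum>z\<in>{z\<in>N y. d z = k}. w y z)"
proof -
  have "{z\<in>N y. d z < d y} = {z\<in>N y. d z = k}"
    using gdist_nbr_ge[OF y] dy unfolding nbrs_def by force
  then show ?thesis
    unfolding d_minus_def using m_pos[OF y] w_sym by (simp add: sum_distrib_left)
qed

lemma wP_outward:
  assumes x: "x \<in> V"
  shows "wP V w x0 (d x) (Suc (d x)) = mP V w m x0 (d x) * dp x"
proof -
  have "wP V w x0 (d x) (Suc (d x)) = (\<Sum>y\<in>S (d x). \<Sum>z\<in>S (Suc (d x)). w y z)"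
    unfolding wP_def by (simp add: sum.cartesian_product split_def)
  also have "\<dots> = (\<Sum>y\<in>S (d x). m y * dp x)"
  proof (rule sum.cong)
    fix y assume "y \<in> S (d x)"
    then have y: "y \<in> V" "d y = d x" unfolding sphere_g_def by auto
    then show "(\<Sum>z\<in>S (Suc (d x)). w y z) = m y * dp x"
      using sum_sphere_weights m_mult_d_plus[OF y(1)] same_sphere[OF y(1) x] by simp
  qed simp
  finally show ?thesis unfolding mP_def by (simp add: sum_distrib_right)
qed

lemma wP_inward:
  assumes x: "x \<in> V" and dx: "d x = Suc k"
  shows "wP V w x0 (Suc k) k = mP V w m x0 (Suc k) * dm x"
proof -
  have "wP V w x0 (Suc k) k = (\<Sum>y\<in>S (Suc k). \<Sum>z\<in>S k. w y z)"
    unfolding wP_def by (simp add: sum.cartesian_product split_def)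
  also have "\<dots> = (\<Sum>y\<in>S (Suc k). m y * dm x)"
  proof (rule sum.cong)
    fix y assume "y \<in> S (Suc k)"
    then have y: "y \<in> V" "d y = Suc k" unfolding sphere_g_def by auto
    then show "(\<Sum>z\<in>S k. w y z) = m y * dm x"
      using sum_sphere_weights m_mult_d_minus[OF y] same_sphere[OF y(1) x] dx by simp
  qed simp
  finally show ?thesis unfolding mP_def by (simp add: sum_distrib_right)
qed

text \<open>At the root the truncated \<open>d x - 1 = 0\<close> is harmless, since then \<open>d\<^sub>-(x) = 0\<close>.\<close>

lemma laplacian_path_graph:
  assumes x: "x \<in> V"
  shows "laplacian (VP V w x0) (wP V w x0) (mP V w m x0) g (d x)
           = dm x * (g (d x - 1) - g (d x)) + dp x * (g (Suc (d x)) - g (d x))"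
proof (cases "d x")
  case 0
  have "{j. Suc j = 0 \<or> j = Suc 0} = {1}" by auto
  moreover have "dm x = 0" using 0 unfolding d_minus_def by simp
  ultimately show ?thesis
    unfolding laplacian_def sum_wP_nbrs using wP_outward[OF x] mP_pos[OF x] 0 by simp
next
  case (Suc k)
  have "{j. Suc j = Suc k \<or> j = Suc (Suc k)} = {k, Suc (Suc k)}" by auto
  then show ?thesis
    unfolding laplacian_def sum_wP_nbrs Suc
    using wP_outward[OF x] wP_inward[OF x Suc] mP_pos[OF x] Suc by (simp add: field_simps)
qed

lemma laplacian_radial:
  assumes x: "x \<in> V"
  shows "laplacian V w m (g \<circ> d) x
           = dm x * (g (d x - 1) - g (d x)) + dp x * (g (Suc (d x)) - g (d x))"
proof -
  let ?A = "{y\<in>N x. d y < d x}" and ?C = "{y\<in>N x. d x < d y}"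
  let ?\<delta> = "\<lambda>y. w x y * (g (d y) - g (d x))"
  have fin: "finite (N x)" using finite_nbrs[OF x] .
  have "sum ?\<delta> (N x) = sum ?\<delta> (?A \<union> ?C)"
    by (rule sum.mono_neutral_right) (use fin in \<open>auto simp: not_less le_less\<close>)
  also have "\<dots> = sum ?\<delta> ?A + sum ?\<delta> ?C"
    by (rule sum.union_disjoint) (use fin in auto)
  finally have split: "sum ?\<delta> (N x) = sum ?\<delta> ?A + sum ?\<delta> ?C" .
  have A: "sum ?\<delta> ?A = (\<Sum>y\<in>?A. w y x) * (g (d x - 1) - g (d x))"
    unfolding sum_distrib_right
  proof (rule sum.cong)
    fix y assume "y \<in> ?A"
    then have "d y = d x - 1" using gdist_nbr_ge[OF x] by (force simp: nbrs_def)
    then show "?\<delta> y = w y x * (g (d x - 1) - g (d x))" using w_sym[of x y] by simp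
  qed simp
  have C: "sum ?\<delta> ?C = (\<Sum>y\<in>?C. w y x) * (g (Suc (d x)) - g (d x))"
    unfolding sum_distrib_right
  proof (rule sum.cong)
    fix y assume "y \<in> ?C"
    then have "d y = Suc (d x)" using gdist_nbr_le[OF x] by (force simp: nbrs_def)
    then show "?\<delta> y = w y x * (g (Suc (d x)) - g (d x))" using w_sym[of x y] by simp
  qed simp
  have "(\<Sum>y\<in>?A. w y x) = m x * dm x" "(\<Sum>y\<in>?C. w y x) = m x * dp x"
    unfolding d_minus_def d_plus_def using m_pos[OF x] by (simp_all add: sum_distrib_left)
  then show ?thesis
    unfolding laplacian_def comp_def split A C using m_pos[OF x] by (simp add: field_simps)
qed

lemma distance_intertwines_laplacians:
  "laplacian_intertwining V w m (VP V w x0) (wP V w x0) (mP V w m x0) d"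
  by unfold_locales (simp add: laplacian_radial laplacian_path_graph)

end

theorem corollary4:
  fixes V :: "'a set" and w :: "'a \<Rightarrow> 'a \<Rightarrow> real" and m :: "'a \<Rightarrow> real"
    and x0 :: 'a and K :: real and n :: ereal
  assumes "weighted_graph V w m"
    and "locally_finite V w"
    and "connected_graph V w"
    and "x0 \<in> V"
    and "weakly_sph_sym V w m x0"
    and "0 < n"
    and "CD V w m K n"
  shows "CD (VP V w x0) (wP V w x0) (mP V w m x0) K n"
proof -
  interpret weakly_sph_sym_graph V w m x0
    using assms by unfold_locales
  \<comment> \<open>The transfer works for any \<open>n\<close>.\<close>
  show ?thesis
    using laplacian_intertwining.CD_transfer[OF distance_intertwines_laplacians assms(7)] VP_eq_image
    by simp
qed

end
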